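(* Let $m$ be a positive integer, $q=3^m$, $n=q-1$, and let $e$ be an integer with $1<e<q-1$, $e\notin C_1$ and $\ell_e=|C_e|=m$. Then the ternary cyclic code $\mathcal{C}_{(1,e)}$ has parameters $[3^m-1,\,3^m-1-2m,\,4]$ if and only if all of the following hold: (C1) $e$ is even; (C2) the equation $(x+1)^e+x^e+1=0$ has the only solution $x=1$ in $\mathrm{GF}(q)^*$; (C3) the equation $(x+1)^e-x^e-1=0$ has the only solution $x=0$ in $\mathrm{GF}(q)$.
   Context: For $j\in\mathbb{Z}_n$, $C_j=\{j,3j,3^2j,\dots,3^{\ell_j-1}j\}$ (mod $n$) is the $3$-cyclotomic coset modulo $n=3^m-1$ containing $j$, with $\ell_j$ the smallest positive integer such that $3^{\ell_j}j\equiv j\pmod n$. Let $\alpha$ be a generator of $\mathrm{GF}(q)^*$ and $m_a(x)$ the minimal polynomial of $a\in\mathrm{GF}(q)$ over $\mathrm{GF}(3)$. For $1<e<q-1$ with $e\notin C_1$, $\mathcal{C}_{(1,e)}$ denotes the cyclic code of length $n$ over $\mathrm{GF}(3)$ with generator polynomial $m_{\alpha}(x)m_{\alpha^e}(x)$. A code with parameters $[n,k,d]$ has length $n$, dimension $k$ and minimum Hamming distance $d$. *)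

theory Defs
  imports "HOL-Computational_Algebra.Polynomial"
begin

definition prime_subfield :: "'a::field set" where
  "prime_subfield = range (of_int :: int \<Rightarrow> 'a)"

definition cyc_coset :: "nat \<Rightarrow> nat \<Rightarrow> nat set" where
  "cyc_coset n j = {(j * 3 ^ i) mod n | i. True}"

definition over_gf3 :: "'a::field poly \<Rightarrow> bool" where
  "over_gf3 p \<longleftrightarrow> (\<forall>i. coeff p i \<in> prime_subfield)"

definition min_poly3 :: "'a::{field,finite} \<Rightarrow> 'a poly" where
  "min_poly3 a = (THE p. over_gf3 p \<and> lead_coeff p = 1 \<and> poly p a = 0 \<and>
      (\<forall>r. over_gf3 r \<and> r \<noteq> 0 \<and> poly r a = 0 \<longrightarrow> degree p \<le> degree r))"

text \<open>Cyclic code of length n over GF(3) with generator polynomial g: codewords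
  c_0 + c_1 x + ... + c_{n-1} x^{n-1} (identified with polynomials of degree < n
  with coefficients in GF(3)) that are multiples of g.\<close>
definition cyclic_code3 :: "nat \<Rightarrow> 'a::field poly \<Rightarrow> 'a poly set" where
  "cyclic_code3 n g = {c. over_gf3 c \<and> degree c < n \<and> g dvd c}"

definition hamming_weight :: "'a::zero poly \<Rightarrow> nat" where
  "hamming_weight c = card {i. coeff c i \<noteq> 0}"

text \<open>A ternary linear code C of length n has parameters [n,k,d]: it has 3^k codewords
  (dimension k over GF(3)) and its minimum distance, the minimum weight of a nonzero
  codeword, is d.\<close>
definition has_params3 :: "'a::field poly set \<Rightarrow> nat \<Rightarrow> nat \<Rightarrow> nat \<Rightarrow> nat \<Rightarrow> bool" where
  "has_params3 C len n k d \<longleftrightarrow> len = n \<and> card C = 3 ^ k \<and>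
      Min {hamming_weight c | c. c \<in> C \<and> c \<noteq> 0} = d"

end

theory Submission
  imports Defs "HOL-Library.FuncSet"
begin

text \<open>The generator polynomial vanishes exactly on the Frobenius orbits of \<alpha> and \<alpha>^e, which are
  disjoint of size m; hence a polynomial over GF(3) of degree < n is a codeword iff it vanishes
  at \<alpha> and \<alpha>^e, and the code has dimension n - 2m.
  A codeword of weight at most 3 is a relation \<Sum> \<plusminus>\<beta>_k = 0 = \<Sum> \<plusminus>\<beta>_k^e between distinct nonzero
  field elements. Weight 1 is impossible, and weight 2 forces \<beta>_1 = -\<beta>_2, hence 2\<beta>_2^e = 0 for even e.
  For weight 3, after normalizing the signs the relation reads u + v + w = 0, which (C2) excludes
  via x = u/v, or u + v = w, which (C3) excludes likewise. Conversely, for odd e the binomial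
  1 + x^i with \<alpha>^i = -1 is a codeword, and any further solution of (C2) or (C3) yields an explicit
  trinomial codeword. Finally, there are more binomials \<plusminus>x^i \<plusminus> x^j than possible values of
  (c(\<alpha>), c(\<alpha>^e)), and the difference of two binomials with equal values is a codeword of weight
  at most 4.\<close>

section \<open>Polynomials over the prime field\<close>

lemma prime_subfield_eq_Ints: "prime_subfield = \<int>"
  by (simp add: prime_subfield_def Ints_def)

lemma over_gf3_iff_Ints: "over_gf3 p \<longleftrightarrow> (\<forall>i. coeff p i \<in> \<int>)"
  by (simp add: over_gf3_def prime_subfield_eq_Ints)

lemma over_gf3_add: "over_gf3 p \<Longrightarrow> over_gf3 q \<Longrightarrow> over_gf3 (p + q)"
  by (simp add: over_gf3_iff_Ints)

lemma over_gf3_diff: "over_gf3 p \<Longrightarrow> over_gf3 q \<Longrightarrow> over_gf3 (p - q)"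
  by (simp add: over_gf3_iff_Ints)

lemma over_gf3_mult: "over_gf3 p \<Longrightarrow> over_gf3 q \<Longrightarrow> over_gf3 (p * q)"
  by (auto simp: over_gf3_iff_Ints coeff_mult)

lemma over_gf3_monom: "a \<in> \<int> \<Longrightarrow> over_gf3 (monom a i)"
  by (simp add: over_gf3_iff_Ints coeff_monom)

lemma poly_prod_linear_factors_eq_0_iff:
  "finite S \<Longrightarrow> poly (\<Prod>g\<in>S. [:-g, 1:]) x = 0 \<longleftrightarrow> x \<in> (S :: 'a::idom set)"
  by (induction S rule: finite_induct) auto

lemma prod_linear_factors_dvd_iff:
  fixes p :: "'a::idom poly"
  assumes "finite S"
  shows "(\<Prod>g\<in>S. [:-g, 1:]) dvd p \<longleftrightarrow> (\<forall>g\<in>S. poly p g = 0)"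
  using assms
proof (induction S arbitrary: p rule: finite_induct)
  case (insert a S)
  show ?case
  proof
    assume "(\<Prod>g\<in>insert a S. [:-g, 1:]) dvd p"
    then obtain k where "p = (\<Prod>g\<in>insert a S. [:-g, 1:]) * k" by (elim dvdE)
    then show "\<forall>g\<in>insert a S. poly p g = 0"
      using insert.hyps by (simp add: poly_prod_linear_factors_eq_0_iff)
  next
    assume roots: "\<forall>g\<in>insert a S. poly p g = 0"
    then have "[:-a, 1:] dvd p"
      by (simp add: poly_eq_0_iff_dvd)
    then obtain q where q: "p = [:-a, 1:] * q" by (elim dvdE)
    have "\<forall>g\<in>S. poly q g = 0"
      using roots q insert.hyps by auto
    then have "(\<Prod>g\<in>S. [:-g, 1:]) dvd q"
      using insert.IH by blast
    then have "[:-a, 1:] * (\<Prod>g\<in>S. [:-g, 1:]) dvd p"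
      unfolding q by (rule mult_dvd_mono[OF dvd_refl])
    then show "(\<Prod>g\<in>insert a S. [:-g, 1:]) dvd p"
      by (simp only: prod.insert[OF insert.hyps])
  qed
qed simp

definition poly_support :: "'a::zero poly \<Rightarrow> nat set" where
  "poly_support c = {i. coeff c i \<noteq> 0}"

lemma finite_poly_support: "finite (poly_support c)"
  by (rule finite_subset[of _ "{..degree c}"]) (auto simp: poly_support_def intro: le_degree)

lemma mem_poly_support_iff: "i \<in> poly_support c \<longleftrightarrow> coeff c i \<noteq> 0"
  by (simp add: poly_support_def)

lemma poly_support_empty_iff: "poly_support c = {} \<longleftrightarrow> c = 0"
  by (auto simp: poly_support_def poly_eq_iff)

lemma poly_eq_sum_support: "poly c x = (\<Sum>i\<in>poly_support c. coeff c i * x ^ i)"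
  for c :: "'a::comm_semiring_1 poly"
  unfolding poly_altdef
  by (rule sum.mono_neutral_right) (auto simp: poly_support_def intro: le_degree)

definition frob_poly :: "'a::comm_ring_1 poly \<Rightarrow> 'a poly" where
  "frob_poly p = map_poly (\<lambda>c. c ^ 3) p"

lemma coeff_frob_poly: "coeff (frob_poly p) i = coeff p i ^ 3"
  by (simp add: frob_poly_def coeff_map_poly)

section \<open>Fields of characteristic 3\<close>

lemma power_sum_ratio_eq_0:
  fixes u v w :: "'a::field"
  assumes "even e" "v \<noteq> 0" "u + v + w = 0" "u ^ e + v ^ e + w ^ e = 0"
  shows "(u / v + 1) ^ e + (u / v) ^ e + 1 = 0"
proof -
  define x where "x = u / v"
  have u: "u = x * v"
    using assms(2) by (simp add: x_def)
  have w: "w = - ((x + 1) * v)"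
    using assms(3) u by (simp add: algebra_simps eq_neg_iff_add_eq_0)
  have "u ^ e + v ^ e + w ^ e = (x * v) ^ e + v ^ e + ((x + 1) * v) ^ e"
    using assms(1) u w by simp
  also have "\<dots> = ((x + 1) ^ e + x ^ e + 1) * v ^ e"
    by (simp only: power_mult_distrib) (simp add: algebra_simps)
  finally show ?thesis
    using assms(2,4) by (simp add: x_def)
qed

lemma power_additive_ratio_eq_0:
  fixes u v w :: "'a::field"
  assumes "v \<noteq> 0" "u + v = w" "u ^ e + v ^ e = w ^ e"
  shows "(u / v + 1) ^ e - (u / v) ^ e - 1 = 0"
proof -
  define x where "x = u / v"
  have u: "u = x * v"
    using assms(1) by (simp add: x_def)
  have w: "w = (x + 1) * v"
    using assms(2) u by (simp add: algebra_simps)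
  have "w ^ e - u ^ e - v ^ e = ((x + 1) * v) ^ e - (x * v) ^ e - v ^ e"
    using u w by simp
  also have "\<dots> = ((x + 1) ^ e - x ^ e - 1) * v ^ e"
    by (simp only: power_mult_distrib) (simp add: algebra_simps)
  finally have "((x + 1) ^ e - x ^ e - 1) * v ^ e = 0"
    by (simp flip: assms(3))
  then show ?thesis
    using assms(1) by (simp add: x_def)
qed

lemma no_zero_sum_triple:
  fixes u v w :: "'a::field"
  assumes "even e"
    and C2: "\<forall>x::'a. x \<noteq> 0 \<and> (x + 1) ^ e + x ^ e + 1 = 0 \<longrightarrow> x = 1"
    and "v \<noteq> 0" "u \<noteq> 0" "u \<noteq> v" "u + v + w = 0" "u ^ e + v ^ e + w ^ e = 0"
  shows False
proof -
  have "u / v \<noteq> 0" "u / v \<noteq> 1"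
    using assms(3-5) by simp_all
  then show False
    using power_sum_ratio_eq_0[OF assms(1,3,6,7)] C2 by blast
qed

lemma no_additive_pair:
  fixes x y z :: "'a::field"
  assumes C3: "\<forall>x::'a. (x + 1) ^ e - x ^ e - 1 = 0 \<longrightarrow> x = 0"
    and "x \<noteq> 0" "y \<noteq> 0" "x + y = z" "x ^ e + y ^ e = z ^ e"
  shows False
proof -
  have "x / y = 0"
    using power_additive_ratio_eq_0[OF assms(3-5)] by (rule C3[rule_format])
  then show False
    using assms(2,3) by simp
qed

context
  assumes char_3: "(3::'a::field) = 0"
begin

lemma two_eq_neg_one: "(2::'a) = -1"
  using char_3 by (simp add: eq_neg_iff_add_eq_0)

lemma two_neq_zero: "(2::'a) \<noteq> 0"
proof
  assume two: "(2::'a) = 0"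
  have "(1::'a) = 3 - 2" by simp
  also have "\<dots> = 0" using char_3 two by simp
  finally show False by simp
qed

lemma neg_one_neq_one_char_3: "(-1::'a) \<noteq> 1"
proof
  assume neg_one: "(-1::'a) = 1"
  have "(2::'a) = 1 + 1" by simp
  also have "\<dots> = -1 + 1" using neg_one by simp
  also have "\<dots> = 0" by simp
  finally show False using two_neq_zero by simp
qed

lemma two_power_even: "even k \<Longrightarrow> (2::'a) ^ k = 1"
  by (simp add: two_eq_neg_one)

lemma eq_neg_add_one_iff: "x = - (x + 1) \<longleftrightarrow> (x::'a) = 1"
proof -
  have "x = - (x + 1) \<longleftrightarrow> x + (x + 1) = 0"
    by (simp only: eq_neg_iff_add_eq_0)
  also have "x + (x + 1) = (1 - x) + 3 * x"
    by (simp add: algebra_simps)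
  finally show ?thesis
    using char_3 by simp
qed

lemma cube_add: "(x + y) ^ 3 = x ^ 3 + (y::'a) ^ 3"
proof -
  have "(x + y) ^ 3 = x ^ 3 + y ^ 3 + 3 * (x\<^sup>2 * y + x * y\<^sup>2)"
    by (simp add: power3_eq_cube power2_eq_square algebra_simps)
  then show ?thesis using char_3 by simp
qed

lemma cube_diff: "(x - y) ^ 3 = x ^ 3 - (y::'a) ^ 3"
  using cube_add[of x "-y"] by simp

lemma cube_sum: "(\<Sum>i\<in>A. f i) ^ 3 = (\<Sum>i\<in>A. (f i :: 'a) ^ 3)"
  by (induction A rule: infinite_finite_induct) (simp_all add: cube_add)

lemma cube_eq_cube_iff: "x ^ 3 = (y::'a) ^ 3 \<longleftrightarrow> x = y"
proof
  assume "x ^ 3 = y ^ 3"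
  then have "(x - y) ^ 3 = 0" using cube_diff[of x y] by simp
  then show "x = y" by simp
qed simp

lemma of_int_char_3_cases: "of_int k \<in> {0, 1, -1::'a}"
proof -
  have "(of_int k :: 'a) = of_int (3 * (k div 3) + k mod 3)"
    by simp
  also have "\<dots> = of_int (k mod 3)"
    by (simp only: of_int_add of_int_mult of_int_numeral char_3) simp
  finally have k: "(of_int k :: 'a) = of_int (k mod 3)" .
  have "k mod 3 = 0 \<or> k mod 3 = 1 \<or> k mod 3 = 2" by presburger
  then show ?thesis
  proof (elim disjE)
    assume "k mod 3 = 2"
    then show ?thesis using k char_3 by (simp add: eq_neg_iff_add_eq_0)
  qed (use k in simp_all)
qed

lemma prime_subfield_eq: "prime_subfield = {0, 1, -1::'a}"
proof
  show "prime_subfield \<subseteq> {0, 1, -1::'a}"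
    unfolding prime_subfield_def by (rule image_subsetI) (rule of_int_char_3_cases)
  have "{0, 1, -1::'a} = of_int ` {0, 1, -1}"
    by simp
  also have "\<dots> \<subseteq> prime_subfield"
    unfolding prime_subfield_def by (rule image_mono) simp
  finally show "{0, 1, -1::'a} \<subseteq> prime_subfield" .
qed

lemma card_prime_subfield: "card (prime_subfield :: 'a set) = 3"
  using neg_one_neq_one_char_3 by (simp add: prime_subfield_eq)

lemma mem_prime_subfield_iff_cube: "c \<in> prime_subfield \<longleftrightarrow> (c::'a) ^ 3 = c"
proof -
  have "c ^ 3 - c = c * (c - 1) * (c + 1)"
    by (simp add: power3_eq_cube algebra_simps)
  then have "c ^ 3 = c \<longleftrightarrow> c * (c - 1) * (c + 1) = 0"
    by (metis eq_iff_diff_eq_0)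
  then show ?thesis
    by (auto simp: prime_subfield_eq eq_neg_iff_add_eq_0)
qed

lemma over_gf3_iff_cube: "over_gf3 (p::'a poly) \<longleftrightarrow> (\<forall>i. coeff p i ^ 3 = coeff p i)"
  by (simp add: over_gf3_def mem_prime_subfield_iff_cube)

lemma over_gf3_iff_frob_poly_eq: "over_gf3 (p::'a poly) \<longleftrightarrow> frob_poly p = p"
  by (simp add: over_gf3_iff_cube poly_eq_iff coeff_frob_poly)

lemma frob_poly_mult: "frob_poly (p * q) = frob_poly p * frob_poly (q::'a poly)"
  by (rule poly_eqI) (simp add: coeff_frob_poly coeff_mult cube_sum power_mult_distrib)

lemma over_gf3_mult_cancel_left:
  assumes "over_gf3 (g::'a poly)" "g \<noteq> 0" "over_gf3 (g * h)"
  shows "over_gf3 h"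
proof -
  have "g * frob_poly h = g * h"
    using assms frob_poly_mult[of g h] by (simp add: over_gf3_iff_frob_poly_eq)
  then show ?thesis
    using assms(2) by (simp add: over_gf3_iff_frob_poly_eq)
qed

lemma poly_cube_over_gf3:
  assumes "over_gf3 r"
  shows "poly r ((x::'a) ^ 3) = poly r x ^ 3"
proof -
  have "poly r x ^ 3 = (\<Sum>i\<le>degree r. (coeff r i * x ^ i) ^ 3)"
    by (simp add: poly_altdef cube_sum)
  also have "\<dots> = (\<Sum>i\<le>degree r. coeff r i * (x ^ 3) ^ i)"
  proof (intro sum.cong refl)
    fix i
    have "(x ^ i) ^ 3 = (x ^ 3) ^ i"
      by (metis power_mult mult.commute)
    then show "(coeff r i * x ^ i) ^ 3 = coeff r i * (x ^ 3) ^ i"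
      using assms by (simp add: power_mult_distrib over_gf3_iff_cube)
  qed
  finally show ?thesis by (simp add: poly_altdef)
qed

lemma card_over_gf3_degree_less:
  assumes "0 < k"
  shows "card {h::'a poly. over_gf3 h \<and> degree h < k} = 3 ^ k"
proof -
  let ?H = "{h::'a poly. over_gf3 h \<and> degree h < k}"
  let ?coeffs = "\<lambda>h. restrict (coeff h) {..<k}"
  have "inj_on ?coeffs ?H"
  proof (rule inj_onI)
    fix p q
    assume "p \<in> ?H" "q \<in> ?H" "?coeffs p = ?coeffs q"
    then have "coeff p i = coeff q i" for i
      by (cases "i < k") (auto dest: fun_cong[of _ _ i] simp: coeff_eq_0)
    then show "p = q"
      by (rule poly_eqI)
  qed
  have image: "?coeffs ` ?H = (\<Pi>\<^sub>E i\<in>{..<k}. prime_subfield)"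
  proof (intro equalityI subsetI)
    fix F
    assume "F \<in> ?coeffs ` ?H"
    then obtain h where "F = ?coeffs h" "over_gf3 h"
      by blast
    then show "F \<in> (\<Pi>\<^sub>E i\<in>{..<k}. prime_subfield)"
      by (simp add: restrict_PiE_iff over_gf3_def)
  next
    fix F :: "nat \<Rightarrow> 'a"
    assume F: "F \<in> (\<Pi>\<^sub>E i\<in>{..<k}. prime_subfield)"
    define h where "h = Poly (map F [0..<k])"
    have coeff_h: "coeff h i = (if i < k then F i else 0)" for i
      by (simp add: h_def nth_default_def)
    have "over_gf3 h"
      using F by (auto simp: over_gf3_def coeff_h prime_subfield_eq)
    moreover have "degree h \<le> k - 1"
      by (rule degree_le) (use assms in \<open>auto simp: coeff_h\<close>)
    moreover have "?coeffs h = F"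
      using F by (auto simp: coeff_h PiE_def extensional_def)
    ultimately show "F \<in> ?coeffs ` ?H"
      using assms by force
  qed
  have "card ?H = card (?coeffs ` ?H)"
    using \<open>inj_on ?coeffs ?H\<close> by (rule card_image[symmetric])
  also have "\<dots> = card (\<Pi>\<^sub>E i\<in>{..<k}. (prime_subfield :: 'a set))"
    by (simp only: image)
  also have "\<dots> = 3 ^ k"
    by (simp add: card_PiE card_prime_subfield)
  finally show ?thesis .
qed

lemma no_two_term_relation:
  fixes u v a b :: 'a
  assumes "even e" "a \<in> {1, -1}" "b \<in> {1, -1}" "v \<noteq> 0" "u \<noteq> v"
    and "a * u + b * v = 0" "a * u ^ e + b * v ^ e = 0"
  shows False
proof -
  define s where "s = a * b"
  have aa: "a * a = 1"
    using assms(2) by auto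
  have "a * (a * x + b * y) = x + s * y" for x y
    unfolding s_def distrib_left mult.assoc[symmetric] aa by simp
  then have rel: "u + s * v = 0" "u ^ e + s * v ^ e = 0"
    using assms(6,7) by (metis mult_zero_right)+
  have "s = 1 \<or> s = -1"
    using assms(2,3) by (auto simp: s_def)
  then show False
  proof
    assume "s = 1"
    then have "u = - v"
      using rel(1) by (simp add: eq_neg_iff_add_eq_0)
    then have "2 * v ^ e = 0"
      using rel(2) \<open>s = 1\<close> assms(1) by simp
    then show False
      using assms(4) two_neq_zero by simp
  next
    assume "s = -1"
    then show False
      using rel(1) assms(5) by simp
  qed
qed

lemma no_three_term_relation:
  fixes u v w a b c :: 'a
  assumes "even e"
    and C2: "\<forall>x::'a. x \<noteq> 0 \<and> (x + 1) ^ e + x ^ e + 1 = 0 \<longrightarrow> x = 1"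
    and C3: "\<forall>x::'a. (x + 1) ^ e - x ^ e - 1 = 0 \<longrightarrow> x = 0"
    and "a \<in> {1, -1}" "b \<in> {1, -1}" "c \<in> {1, -1}"
    and "u \<noteq> 0" "v \<noteq> 0" "w \<noteq> 0" "u \<noteq> v"
    and "a * u + b * v + c * w = 0" "a * u ^ e + b * v ^ e + c * w ^ e = 0"
  shows False
proof -
  have no_additive: False if "x + y - z = 0" "x ^ e + y ^ e - z ^ e = 0" "x \<noteq> 0" "y \<noteq> 0"
    for x y z :: 'a
    using no_additive_pair[OF C3 that(3,4)] that(1,2) by simp
  define s t where "s = a * b" and "t = a * c"
  have aa: "a * a = 1"
    using assms(4) by auto
  have "a * (a * x + b * y + c * z) = x + s * y + t * z" for x y z
    unfolding s_def t_def distrib_left mult.assoc[symmetric] aa by simp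
  then have rel: "u + s * v + t * w = 0" "u ^ e + s * v ^ e + t * w ^ e = 0"
    using assms(11,12) by (metis mult_zero_right)+
  have "s = 1 \<or> s = -1" "t = 1 \<or> t = -1"
    using assms(4-6) by (auto simp: s_def t_def)
  then consider "s = 1" "t = 1" | "s = 1" "t = -1" | "s = -1" "t = 1" | "s = -1" "t = -1"
    by blast
  then show False
  proof cases
    case 1
    then have "u + v + w = 0" "u ^ e + v ^ e + w ^ e = 0"
      using rel by simp_all
    then show False
      by (rule no_zero_sum_triple[OF assms(1) C2 assms(8,7,10)])
  next
    case 2
    then show False
      using rel no_additive[of u v w] assms(7,8) by simp
  next
    case 3
    then show False
      using rel no_additive[of u w v] assms(7,9) by (simp add: algebra_simps)
  next
    case 4
    have "v + w - u = - (u + s * v + t * w)" "v ^ e + w ^ e - u ^ e = - (u ^ e + s * v ^ e + t * w ^ e)"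
      using 4 by simp_all
    then show False
      using rel no_additive[of v w u] assms(8,9) by simp
  qed
qed

end

section \<open>Minimal polynomials over GF(3)\<close>

definition conjugates :: "'a::monoid_mult \<Rightarrow> 'a set" where
  "conjugates b = range (\<lambda>i. b ^ 3 ^ i)"

lemma self_mem_conjugates: "b \<in> conjugates b"
  unfolding conjugates_def by (rule range_eqI[where x=0]) simp

lemma cube_power_3_power: "(b ^ 3 ^ i) ^ 3 = b ^ 3 ^ Suc i" for b :: "'a::monoid_mult"
  by (simp add: power_mult[symmetric] mult.commute)

context
  assumes char_3: "(3::'a::{field,finite}) = 0"
begin

lemma poly_conjugate_eq_0:
  assumes "over_gf3 r" "poly r b = 0" "c \<in> conjugates b"
  shows "poly r (c::'a) = 0"
proof -
  have "poly r (b ^ 3 ^ i) = 0" for i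
  proof (induction i)
    case (Suc i)
    have "poly r (b ^ 3 ^ Suc i) = poly r (b ^ 3 ^ i) ^ 3"
      by (simp only: cube_power_3_power[symmetric] poly_cube_over_gf3[OF char_3 assms(1)])
    then show ?case
      using Suc by simp
  qed (use assms in simp)
  then show ?thesis
    using assms(3) by (auto simp: conjugates_def)
qed

lemma cube_image_conjugates: "(\<lambda>x. x ^ 3) ` conjugates b = conjugates (b::'a)"
proof (rule card_subset_eq)
  show "(\<lambda>x. x ^ 3) ` conjugates b \<subseteq> conjugates b"
    unfolding conjugates_def by (auto simp only: cube_power_3_power)
  have "inj_on (\<lambda>x. x ^ 3) (conjugates b)"
    by (rule inj_onI) (simp add: cube_eq_cube_iff[OF char_3])
  then show "card ((\<lambda>x. x ^ 3) ` conjugates b) = card (conjugates b)"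
    by (rule card_image)
qed simp

lemma over_gf3_prod_conjugates: "over_gf3 (\<Prod>c\<in>conjugates (b::'a). [:-c, 1:])"
proof -
  have frob_linear: "frob_poly [:-c, 1:] = [:-(c ^ 3), 1:]" for c :: 'a
    by (rule poly_eqI) (simp add: coeff_frob_poly coeff_pCons split: nat.split)
  have frob_prod: "frob_poly (\<Prod>c\<in>A. f c) = (\<Prod>c\<in>A. frob_poly (f c))" for A and f :: "'a \<Rightarrow> 'a poly"
    by (induction A rule: infinite_finite_induct)
      (simp_all add: frob_poly_mult[OF char_3], simp add: frob_poly_def)
  have "frob_poly (\<Prod>c\<in>conjugates b. [:-c, 1:]) = (\<Prod>c\<in>conjugates b. [:-(c ^ 3), 1:])"
    by (simp add: frob_prod frob_linear)
  also have "\<dots> = (\<Prod>c\<in>(\<lambda>x. x ^ 3) ` conjugates b. [:-c, 1:])"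
    by (subst prod.reindex) (auto intro: inj_onI simp: cube_eq_cube_iff[OF char_3])
  finally show ?thesis
    by (simp add: over_gf3_iff_frob_poly_eq[OF char_3] cube_image_conjugates)
qed

lemma min_poly3_eq_prod_conjugates: "min_poly3 (b::'a) = (\<Prod>c\<in>conjugates b. [:-c, 1:])"
  unfolding min_poly3_def
proof (rule the_equality)
  let ?P = "\<Prod>c\<in>conjugates b. [:-c, 1:]"
  have monic: "lead_coeff ?P = 1"
    by (simp add: lead_coeff_prod)
  have dvd: "?P dvd r" if "over_gf3 r" "poly r b = 0" for r
    using that by (simp add: prod_linear_factors_dvd_iff poly_conjugate_eq_0)
  show "over_gf3 ?P \<and> lead_coeff ?P = 1 \<and> poly ?P b = 0 \<and>
    (\<forall>r. over_gf3 r \<and> r \<noteq> 0 \<and> poly r b = 0 \<longrightarrow> degree ?P \<le> degree r)"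
    using over_gf3_prod_conjugates monic dvd
    by (auto simp: poly_prod_linear_factors_eq_0_iff self_mem_conjugates dvd_imp_degree_le)
  fix p
  assume p: "over_gf3 p \<and> lead_coeff p = 1 \<and> poly p b = 0 \<and>
    (\<forall>r. over_gf3 r \<and> r \<noteq> 0 \<and> poly r b = 0 \<longrightarrow> degree p \<le> degree r)"
  then obtain k where k: "p = ?P * k"
    using dvd by blast
  have "?P \<noteq> 0"
    using monic by auto
  moreover have "degree p \<le> degree ?P"
    using p over_gf3_prod_conjugates \<open>?P \<noteq> 0\<close>
    by (simp add: poly_prod_linear_factors_eq_0_iff self_mem_conjugates)
  moreover have "k \<noteq> 0"
    using k p by auto
  ultimately have "degree k = 0"
    using k by (simp add: degree_mult_eq)
  moreover have "lead_coeff k = 1"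
    using k p monic by (simp add: lead_coeff_mult)
  ultimately show "p = ?P"
    using k by (auto elim!: degree_eq_zeroE)
qed

end

section \<open>Counting and cyclotomic cosets\<close>

lemma small_set_cases:
  assumes "finite S" "S \<noteq> {}" "card S \<le> 3"
  obtains i where "S = {i}"
    | i j where "S = {i, j}" "i \<noteq> j"
    | i j k where "S = {i, j, k}" "i \<noteq> j" "i \<noteq> k" "j \<noteq> k"
proof -
  have "card S \<noteq> 0"
    using assms(1,2) by simp
  then have "card S = 1 \<or> card S = 2 \<or> card S = 3"
    using assms(3) by arith
  then show ?thesis
    using that by (auto simp: card_1_singleton_iff card_2_iff card_3_iff)
qed

lemma exists_other_element: "a \<in> A \<Longrightarrow> A \<noteq> {a} \<Longrightarrow> \<exists>x\<in>A. x \<noteq> a"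
  by auto

lemma two_mul_card_Sigma_lessThan: "2 * card (SIGMA j:{..<k}. {..<j}) = k * (k - 1)"
proof (induction k)
  case (Suc k)
  then show ?case
    by (cases k) (simp_all add: lessThan_Suc Sigma_Un_distrib1 card_Un_disjoint algebra_simps)
qed simp

lemma binomial_eq_binomialD:
  fixes a b a' b' :: "'a::comm_monoid_add"
  assumes "i < j" "i' < j'" "a \<noteq> 0" "b \<noteq> 0" "a' \<noteq> 0" "b' \<noteq> 0"
    and "monom a i + monom b j = monom a' i' + monom b' j'"
  shows "i = i' \<and> j = j' \<and> a = a' \<and> b = b'"
proof -
  have c: "(if i = t then a else 0) + (if j = t then b else 0) =
           (if i' = t then a' else 0) + (if j' = t then b' else 0)" for t
    using arg_cong[OF assms(7), of "\<lambda>p. coeff p t"] by (simp add: coeff_monom)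
  have "i = i' \<or> i = j'" "j = i' \<or> j = j'" "i' = i \<or> i' = j" "j' = i \<or> j' = j"
    using c[of i] c[of j] c[of i'] c[of j'] assms(1-6) by (auto split: if_splits)
  then have "i = i'" "j = j'"
    using assms(1,2) by auto
  moreover have "a = a'" "b = b'"
    using c[of i] c[of j] assms(1) \<open>i = i'\<close> \<open>j = j'\<close> by auto
  ultimately show ?thesis
    by simp
qed

lemma cyc_coset_mem_of_overlap:
  assumes "3 ^ m mod n = 1" "0 < m" "(a * 3 ^ i) mod n = (b * 3 ^ j) mod n"
  shows "b mod n \<in> cyc_coset n a"
proof -
  define s where "s = m * j - j"
  have "j + s = m * j"
    using assms(2) by (simp add: s_def)
  have "((3::nat) ^ m) ^ j mod n = 1 mod n"
    by (metis assms(1) power_mod power_one)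
  then have "b mod n = b * (3 ^ m) ^ j mod n"
    by (metis mod_mult_right_eq mult.right_neutral)
  also have "((3::nat) ^ m) ^ j = 3 ^ j * 3 ^ s"
    by (simp flip: power_mult power_add add: \<open>j + s = m * j\<close> mult.commute)
  then have "b * (3 ^ m) ^ j mod n = (b * 3 ^ j) * 3 ^ s mod n"
    by (simp add: mult.assoc)
  also have "\<dots> = (a * 3 ^ i) * 3 ^ s mod n"
    by (metis assms(3) mod_mult_left_eq)
  also have "\<dots> = (a * 3 ^ (i + s)) mod n"
    by (simp add: power_add mult.assoc)
  finally show ?thesis
    unfolding cyc_coset_def by blast
qed

lemma of_nat_card_UNIV_eq_0: "of_nat (card (UNIV :: 'a::{ring_1,finite} set)) = (0::'a)"
proof -
  have "(\<Sum>y\<in>UNIV. 1 + y) = (\<Sum>y\<in>(UNIV::'a set). y)"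
    by (rule sum.reindex_bij_witness[where i="\<lambda>y. y - 1" and j="\<lambda>y. 1 + y"]) auto
  then show ?thesis
    by (simp add: sum.distrib)
qed

lemma two_mul_less_three_power: "2 \<le> m \<Longrightarrow> 2 * m + 1 < (3::nat) ^ m"
proof (induction m rule: dec_induct)
  case (step m)
  then show ?case by simp
qed simp

section \<open>The code\<close>

locale ternary_cyclic_code =
  fixes \<alpha> :: "'a::{field,finite}" and m e n :: nat
  assumes m_pos: "0 < m"
    and card_field: "card (UNIV :: 'a set) = 3 ^ m"
    and n_eq: "n = 3 ^ m - 1"
    and alpha_powers: "(\<lambda>i. \<alpha> ^ i) ` {..<n} = UNIV - {0}"
    and e_gt_1: "1 < e"
    and e_less: "e < n"
    and e_notin_coset_1: "e \<notin> cyc_coset n 1"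
    and card_coset_e: "card (cyc_coset n e) = m"
begin

lemma char_3: "(3::'a) = 0"
proof -
  have "(3::'a) ^ m = 0"
    using of_nat_card_UNIV_eq_0[where 'a='a] card_field by simp
  then show ?thesis
    by simp
qed

lemma three_power_m: "3 ^ m = n + 1"
  using n_eq by simp

lemma three_power_m_mod: "3 ^ m mod n = 1"
proof -
  have "1 < n"
    using e_gt_1 e_less by simp
  then show ?thesis
    by (simp add: three_power_m mod_Suc)
qed

lemma m_ge_2: "2 \<le> m"
proof (rule ccontr)
  assume "\<not> 2 \<le> m"
  then have "m = 1"
    using m_pos by simp
  then show False
    using n_eq e_gt_1 e_less by simp
qed

lemma n_ge_8: "8 \<le> n"
proof -
  have "(3::nat) ^ 2 \<le> 3 ^ m"
    using m_ge_2 by (rule power_increasing) simp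
  then show ?thesis
    using three_power_m by simp
qed

lemma two_m_less_n: "2 * m < n"
  using two_mul_less_three_power[OF m_ge_2] three_power_m by simp

lemma alpha_power_inj: "inj_on (\<lambda>i. \<alpha> ^ i) {..<n}"
proof (rule eq_card_imp_inj_on)
  show "card ((\<lambda>i. \<alpha> ^ i) ` {..<n}) = card {..<n}"
    unfolding alpha_powers using card_field n_eq by (simp add: card_Diff_singleton)
qed simp

lemma alpha_power_eq_iff_less: "i < n \<Longrightarrow> j < n \<Longrightarrow> \<alpha> ^ i = \<alpha> ^ j \<longleftrightarrow> i = j"
  using alpha_power_inj by (auto dest: inj_onD)

lemma nonzero_eq_alpha_power: "x \<noteq> 0 \<Longrightarrow> \<exists>i<n. \<alpha> ^ i = x"
  using alpha_powers by (metis Diff_iff UNIV_I imageE insertI1 lessThan_iff singletonD)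

lemma alpha_nonzero: "\<alpha> \<noteq> 0"
proof -
  have "\<alpha> ^ 1 \<in> (\<lambda>i. \<alpha> ^ i) ` {..<n}"
    using e_gt_1 e_less by (intro imageI) simp
  then show ?thesis
    by (simp add: alpha_powers)
qed

lemma alpha_power_nonzero: "\<alpha> ^ i \<noteq> 0"
  using alpha_nonzero by simp

lemma alpha_power_n: "\<alpha> ^ n = 1"
proof -
  obtain k where k: "k < n" "\<alpha> ^ k = \<alpha> ^ n"
    using nonzero_eq_alpha_power[of "\<alpha> ^ n"] alpha_nonzero by auto
  have "\<alpha> ^ (n - k) * \<alpha> ^ k = \<alpha> ^ n"
    using k(1) by (simp flip: power_add)
  also have "\<dots> = \<alpha> ^ 0 * \<alpha> ^ k"
    using k(2) by simp
  finally have "\<alpha> ^ (n - k) * \<alpha> ^ k = \<alpha> ^ 0 * \<alpha> ^ k" .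
  then have "\<alpha> ^ (n - k) = \<alpha> ^ 0"
    using alpha_nonzero by simp
  have "k = 0"
  proof (rule ccontr)
    assume "k \<noteq> 0"
    then have "n - k < n" "n - k \<noteq> 0"
      using k(1) by auto
    then show False
      using \<open>\<alpha> ^ (n - k) = \<alpha> ^ 0\<close> alpha_power_eq_iff_less[of "n - k" 0] by simp
  qed
  then show ?thesis
    using k(2) by simp
qed

lemma alpha_power_mod: "\<alpha> ^ (k mod n) = \<alpha> ^ k"
proof -
  have "\<alpha> ^ k = (\<alpha> ^ n) ^ (k div n) * \<alpha> ^ (k mod n)"
    by (simp flip: power_mult power_add)
  then show ?thesis
    by (simp add: alpha_power_n)
qed

lemma alpha_power_eq_iff: "\<alpha> ^ i = \<alpha> ^ j \<longleftrightarrow> i mod n = j mod n"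
  using alpha_power_eq_iff_less[of "i mod n" "j mod n"] e_less
  by (simp add: alpha_power_mod)

lemma cyc_coset_eq_range: "cyc_coset n j = range (\<lambda>i. (j * 3 ^ i) mod n)"
  by (auto simp: cyc_coset_def)

lemma cyc_coset_subset: "cyc_coset n j \<subseteq> {..<n}"
  using e_less by (auto simp: cyc_coset_eq_range)

lemma cyc_coset_1: "cyc_coset n 1 = (\<lambda>i. 3 ^ i) ` {..<m}"
proof -
  have less_n: "(3::nat) ^ i < n" if "i < m" for i
  proof -
    have "(3::nat) ^ Suc i \<le> 3 ^ m"
      using that by (intro power_increasing) auto
    then have "3 * 3 ^ i \<le> n + 1"
      using three_power_m by simp
    moreover have "(1::nat) \<le> 3 ^ i"
      by simp
    ultimately show ?thesis
      by linarith
  qed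
  have "(3::nat) ^ i mod n = 3 ^ (i mod m) mod n" for i
  proof -
    have "(3::nat) ^ i = (3 ^ m) ^ (i div m) * 3 ^ (i mod m)"
      by (simp flip: power_mult power_add)
    then show ?thesis
      using three_power_m_mod by (metis mod_mult_left_eq mult_1 power_mod power_one)
  qed
  then have "range (\<lambda>i. (3::nat) ^ i mod n) = (\<lambda>i. 3 ^ i mod n) ` {..<m}"
    using m_pos by (auto intro: image_eqI[where x="_ mod m"])
  also have "\<dots> = (\<lambda>i. 3 ^ i) ` {..<m}"
    using less_n by (intro image_cong) simp_all
  finally show ?thesis
    by (simp add: cyc_coset_eq_range)
qed

lemma conjugates_alpha_power: "conjugates (\<alpha> ^ j) = (\<lambda>k. \<alpha> ^ k) ` cyc_coset n j"
proof -
  have "(\<lambda>i. (\<alpha> ^ j) ^ 3 ^ i) = (\<lambda>i. \<alpha> ^ ((j * 3 ^ i) mod n))"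
    by (simp add: alpha_power_mod power_mult)
  then show ?thesis
    unfolding conjugates_def cyc_coset_eq_range image_image by (rule arg_cong)
qed

lemma card_conjugates_alpha_power: "card (conjugates (\<alpha> ^ j)) = card (cyc_coset n j)"
  unfolding conjugates_alpha_power
  using inj_on_subset[OF alpha_power_inj cyc_coset_subset] by (rule card_image)

lemma card_conjugates_alpha: "card (conjugates \<alpha>) = m"
proof -
  have "inj_on (\<lambda>i. (3::nat) ^ i) {..<m}"
    by (auto intro: inj_onI)
  then have "card (cyc_coset n 1) = m"
    unfolding cyc_coset_1 by (simp add: card_image)
  then show ?thesis
    using card_conjugates_alpha_power[of 1] by simp
qed

lemma conjugates_disjoint: "conjugates \<alpha> \<inter> conjugates (\<alpha> ^ e) = {}"
proof (rule ccontr)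
  assume "conjugates \<alpha> \<inter> conjugates (\<alpha> ^ e) \<noteq> {}"
  then obtain i j where "\<alpha> ^ (1 * 3 ^ i) = \<alpha> ^ (e * 3 ^ j)"
    by (auto simp: conjugates_def power_mult)
  then have "e mod n \<in> cyc_coset n 1"
    by (intro cyc_coset_mem_of_overlap[OF three_power_m_mod m_pos]) (simp add: alpha_power_eq_iff)
  then show False
    using e_less e_notin_coset_1 by simp
qed

abbreviation generator :: "'a poly" where
  "generator \<equiv> min_poly3 \<alpha> * min_poly3 (\<alpha> ^ e)"

abbreviation code :: "'a poly set" where
  "code \<equiv> cyclic_code3 n generator"

lemma generator_eq: "generator = (\<Prod>c\<in>conjugates \<alpha> \<union> conjugates (\<alpha> ^ e). [:-c, 1:])"
  using conjugates_disjoint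
  by (simp add: min_poly3_eq_prod_conjugates[OF char_3] prod.union_disjoint)

lemma degree_generator: "degree generator = 2 * m"
  using conjugates_disjoint card_conjugates_alpha card_conjugates_alpha_power[of e] card_coset_e
  by (simp add: generator_eq degree_prod_eq_sum_degree card_Un_disjoint)

lemma generator_nonzero: "generator \<noteq> 0"
  by (simp add: generator_eq)

lemma over_gf3_generator: "over_gf3 generator"
  by (simp add: min_poly3_eq_prod_conjugates[OF char_3] over_gf3_prod_conjugates[OF char_3]
      over_gf3_mult)

lemma mem_code_iff:
  "c \<in> code \<longleftrightarrow> over_gf3 c \<and> degree c < n \<and> poly c \<alpha> = 0 \<and> poly c (\<alpha> ^ e) = 0"
proof -
  have "generator dvd c \<longleftrightarrow> poly c \<alpha> = 0 \<and> poly c (\<alpha> ^ e) = 0" if "over_gf3 c"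
    using that poly_conjugate_eq_0[OF char_3 that] self_mem_conjugates
    by (auto simp: generator_eq prod_linear_factors_dvd_iff)
  then show ?thesis
    by (auto simp: cyclic_code3_def)
qed

lemma code_eq_image: "code = (\<lambda>h. generator * h) ` {h. over_gf3 h \<and> degree h < n - 2 * m}"
proof -
  have degree: "degree (generator * h) < n \<longleftrightarrow> degree h < n - 2 * m" for h
    using two_m_less_n generator_nonzero
    by (cases "h = 0") (auto simp: degree_mult_eq degree_generator)
  have "c \<in> code \<longleftrightarrow> (\<exists>h. c = generator * h \<and> over_gf3 h \<and> degree h < n - 2 * m)" for c
  proof
    assume "c \<in> code"
    then have c: "over_gf3 c" "degree c < n" "generator dvd c"
      by (simp_all add: cyclic_code3_def)
    then obtain h where h: "c = generator * h"
      by (elim dvdE)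
    have "over_gf3 h"
      using over_gf3_mult_cancel_left[OF char_3 over_gf3_generator generator_nonzero] c(1) h
      by simp
    then show "\<exists>h. c = generator * h \<and> over_gf3 h \<and> degree h < n - 2 * m"
      using h c(2) degree by blast
  next
    assume "\<exists>h. c = generator * h \<and> over_gf3 h \<and> degree h < n - 2 * m"
    then obtain h where "c = generator * h" "over_gf3 h" "degree h < n - 2 * m"
      by blast
    then show "c \<in> code"
      using over_gf3_mult[OF over_gf3_generator] degree by (simp add: cyclic_code3_def)
  qed
  then show ?thesis
    by blast
qed

lemma card_code: "card code = 3 ^ (n - 2 * m)"
proof -
  have "inj_on (\<lambda>h. generator * h) {h. over_gf3 h \<and> degree h < n - 2 * m}"
    using generator_nonzero by (auto intro: inj_onI)
  then have "card code = card {h::'a poly. over_gf3 h \<and> degree h < n - 2 * m}"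
    unfolding code_eq_image by (rule card_image)
  also have "\<dots> = 3 ^ (n - 2 * m)"
    using two_m_less_n by (intro card_over_gf3_degree_less[OF char_3]) simp
  finally show ?thesis .
qed

lemma finite_code: "finite code"
  using card_code card.infinite by fastforce

lemma codeword_coeff:
  assumes "c \<in> code" "i \<in> poly_support c"
  shows "i < n" "coeff c i \<in> {1, -1}"
proof -
  have "over_gf3 c" "degree c < n"
    using assms(1) by (simp_all add: mem_code_iff)
  then show "i < n" "coeff c i \<in> {1, -1}"
    using assms(2) le_degree[of c i]
    by (auto simp: mem_poly_support_iff over_gf3_def prime_subfield_eq[OF char_3])
qed

lemma codeword_relations:
  assumes "c \<in> code"
  shows "(\<Sum>i\<in>poly_support c. coeff c i * \<alpha> ^ i) = 0"
    and "(\<Sum>i\<in>poly_support c. coeff c i * (\<alpha> ^ i) ^ e) = 0"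
proof -
  have "poly c (\<alpha> ^ e) = (\<Sum>i\<in>poly_support c. coeff c i * (\<alpha> ^ i) ^ e)"
    unfolding poly_eq_sum_support by (intro sum.cong refl) (simp flip: power_mult add: mult.commute)
  then show "(\<Sum>i\<in>poly_support c. coeff c i * \<alpha> ^ i) = 0"
    "(\<Sum>i\<in>poly_support c. coeff c i * (\<alpha> ^ i) ^ e) = 0"
    using assms by (simp_all add: mem_code_iff flip: poly_eq_sum_support)
qed

lemma hamming_weight_ge_4:
  assumes "even e"
    and C2: "\<forall>x::'a. x \<noteq> 0 \<and> (x + 1) ^ e + x ^ e + 1 = 0 \<longrightarrow> x = 1"
    and C3: "\<forall>x::'a. (x + 1) ^ e - x ^ e - 1 = 0 \<longrightarrow> x = 0"
    and c: "c \<in> code" "c \<noteq> 0"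
  shows "4 \<le> hamming_weight c"
proof (rule ccontr)
  let ?S = "poly_support c"
  note coeff = codeword_coeff[OF c(1)] and rel = codeword_relations[OF c(1)]
  have distinct: "\<alpha> ^ i \<noteq> \<alpha> ^ j" if "i \<in> ?S" "j \<in> ?S" "i \<noteq> j" for i j
    using that coeff(1) alpha_power_eq_iff_less by simp
  assume "\<not> 4 \<le> hamming_weight c"
  then have card: "card ?S \<le> 3"
    by (simp add: hamming_weight_def poly_support_def)
  have nonempty: "?S \<noteq> {}"
    using c(2) by (simp add: poly_support_empty_iff)
  show False
  proof (cases rule: small_set_cases[OF finite_poly_support nonempty card])
    case (1 i)
    then show False
      using rel(1) alpha_nonzero by (auto simp: mem_poly_support_iff)
  next
    case (2 i j)
    then have ij: "i \<in> ?S" "j \<in> ?S"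
      by simp_all
    have "coeff c i * \<alpha> ^ i + coeff c j * \<alpha> ^ j = 0"
      "coeff c i * (\<alpha> ^ i) ^ e + coeff c j * (\<alpha> ^ j) ^ e = 0"
      using rel 2 by simp_all
    then show False
      by (rule no_two_term_relation[OF char_3 \<open>even e\<close> coeff(2)[OF ij(1)] coeff(2)[OF ij(2)]
            alpha_power_nonzero distinct[OF ij 2(2)]])
  next
    case (3 i j k)
    then have ijk: "i \<in> ?S" "j \<in> ?S" "k \<in> ?S"
      by simp_all
    have "coeff c i * \<alpha> ^ i + coeff c j * \<alpha> ^ j + coeff c k * \<alpha> ^ k = 0"
      "coeff c i * (\<alpha> ^ i) ^ e + coeff c j * (\<alpha> ^ j) ^ e + coeff c k * (\<alpha> ^ k) ^ e = 0"
      using rel 3 by (simp_all add: add.assoc)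
    then show False
      by (rule no_three_term_relation[OF char_3 \<open>even e\<close> C2 C3 coeff(2)[OF ijk(1)]
            coeff(2)[OF ijk(2)] coeff(2)[OF ijk(3)] alpha_power_nonzero alpha_power_nonzero
            alpha_power_nonzero distinct[OF ijk(1,2) 3(2)]])
  qed
qed

lemma low_weight_codeword:
  assumes "over_gf3 w" "w \<noteq> 0" "poly_support w \<subseteq> T" "T \<subseteq> {..<n}" "card T \<le> k"
    and "poly w \<alpha> = 0" "poly w (\<alpha> ^ e) = 0"
  shows "w \<in> code" "hamming_weight w \<le> k"
proof -
  have "degree w < n"
  proof (rule ccontr)
    assume "\<not> degree w < n"
    then have "degree w \<in> poly_support w"
      using assms(2) by (simp add: poly_support_def)
    then show False
      using assms(3,4) \<open>\<not> degree w < n\<close> by auto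
  qed
  then show "w \<in> code"
    using assms by (simp add: mem_code_iff)
  have "card (poly_support w) \<le> card T"
    using assms(3,4) by (intro card_mono) (auto intro: finite_subset)
  then show "hamming_weight w \<le> k"
    using assms(5) by (simp add: hamming_weight_def poly_support_def)
qed

lemma trinomial_codeword:
  assumes "i < n" "j < n" "k < n" "i \<noteq> j" "i \<noteq> k"
    and "a \<in> {1, -1}" "b \<in> {1, -1}" "c \<in> {0, 1, -1}"
    and "a * \<alpha> ^ i + b * \<alpha> ^ j + c * \<alpha> ^ k = 0"
    and "a * (\<alpha> ^ i) ^ e + b * (\<alpha> ^ j) ^ e + c * (\<alpha> ^ k) ^ e = 0"
  shows "\<exists>w\<in>code. w \<noteq> 0 \<and> hamming_weight w \<le> 3"
proof -
  define w where "w = monom a i + monom b j + monom c k"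
  have coeff_w: "coeff w t = (if t = i then a else 0) + (if t = j then b else 0) + (if t = k then c else 0)" for t
    by (simp add: w_def coeff_monom)
  have "over_gf3 w"
    using assms(6-8) by (auto simp: w_def prime_subfield_eq_Ints intro!: over_gf3_add over_gf3_monom)
  moreover have "w \<noteq> 0"
    using coeff_w[of i] assms(4-6) by auto
  moreover have "poly_support w \<subseteq> {i, j, k}"
    by (auto simp: poly_support_def coeff_w split: if_splits)
  moreover have "card {i, j, k} \<le> 3"
    using card_length[of "[i, j, k]"] by simp
  moreover have "(\<alpha> ^ e) ^ t = (\<alpha> ^ t) ^ e" for t
    by (simp flip: power_mult add: mult.commute)
  ultimately show ?thesis
    using low_weight_codeword[of w "{i, j, k}" 3] assms by (auto simp: w_def poly_monom)
qed

lemma weight_3_codeword_if_odd: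
  assumes "odd e"
  shows "\<exists>w\<in>code. w \<noteq> 0 \<and> hamming_weight w \<le> 3"
proof -
  obtain i where i: "i < n" "\<alpha> ^ i = -1"
    using nonzero_eq_alpha_power[of "-1"] by auto
  have "i \<noteq> 0"
  proof
    assume "i = 0"
    then have "(-1::'a) = 1"
      using i by simp
    then show False
      using neg_one_neq_one_char_3[OF char_3] by contradiction
  qed
  then show ?thesis
    using i assms e_less by (intro trinomial_codeword[of i 0 0 1 1 0]) simp_all
qed

lemma weight_3_codeword_if_not_C2:
  fixes x :: 'a
  assumes "even e" "x \<noteq> 0" "x \<noteq> 1" "(x + 1) ^ e + x ^ e + 1 = 0"
  shows "\<exists>w\<in>code. w \<noteq> 0 \<and> hamming_weight w \<le> 3"
proof -
  have "x + 1 \<noteq> 0"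
  proof
    assume "x + 1 = 0"
    then have "x = -1"
      by (simp add: eq_neg_iff_add_eq_0)
    then have "(2::'a) = 0"
      using assms(1,4) e_gt_1 by (simp add: power_0_left)
    then show False
      using two_neq_zero[OF char_3] by contradiction
  qed
  then have "- (x + 1) \<noteq> 0"
    by (simp only: neg_equal_0_iff_equal not_False_eq_True)
  then obtain k where k: "k < n" "\<alpha> ^ k = - (x + 1)"
    using nonzero_eq_alpha_power by blast
  obtain i where i: "i < n" "\<alpha> ^ i = x"
    using nonzero_eq_alpha_power assms(2) by blast
  have "x \<noteq> - (x + 1)"
    using assms(3) eq_neg_add_one_iff[OF char_3] by simp
  then have "i \<noteq> k"
    using i k by auto
  moreover have "i \<noteq> 0"
    using i(2) assms(3) by (metis power_0)
  moreover have "(- (x + 1)) ^ e = (x + 1) ^ e"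
    using assms(1) by (rule power_minus_even)
  then have "x ^ e + 1 + (- (x + 1)) ^ e = 0"
    using assms(4) by (simp add: algebra_simps)
  ultimately show ?thesis
    by (intro trinomial_codeword[of i 0 k 1 1 1]) (use i k e_less in simp_all)
qed

lemma weight_3_codeword_if_not_C3:
  fixes x :: 'a
  assumes "even e" "x \<noteq> 0" "(x + 1) ^ e - x ^ e - 1 = 0"
  shows "\<exists>w\<in>code. w \<noteq> 0 \<and> hamming_weight w \<le> 3"
proof -
  have "x + 1 \<noteq> 0"
  proof
    assume "x + 1 = 0"
    then have "x = -1"
      by (simp add: eq_neg_iff_add_eq_0)
    then have "(2::'a) = 0"
      using assms(1,3) e_gt_1 by (simp add: power_0_left)
    then show False
      using two_neq_zero[OF char_3] by contradiction
  qed
  then obtain k where k: "k < n" "\<alpha> ^ k = x + 1"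
    using nonzero_eq_alpha_power by blast
  obtain i where i: "i < n" "\<alpha> ^ i = x"
    using nonzero_eq_alpha_power assms(2) by blast
  have "x \<noteq> 1"
  proof
    assume "x = 1"
    then have "(-1::'a) = 0"
      using assms(3) two_power_even[OF char_3 assms(1)] by simp
    then show False
      by simp
  qed
  then have "i \<noteq> 0"
    using i(2) by (metis power_0)
  moreover have "i \<noteq> k"
    using i(2) k(2) by auto
  moreover have "x ^ e + 1 + (-1) * (x + 1) ^ e = 0"
    using assms(3) by (simp add: algebra_simps)
  ultimately show ?thesis
    by (intro trinomial_codeword[of i 0 k 1 1 "-1"]) (use i k e_less in simp_all)
qed

lemma weight_3_codeword_unless_conditions:
  assumes "\<not> (even e \<and> {x::'a. x \<noteq> 0 \<and> (x + 1) ^ e + x ^ e + 1 = 0} = {1} \<and>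
              {x::'a. (x + 1) ^ e - x ^ e - 1 = 0} = {0})"
  shows "\<exists>w\<in>code. w \<noteq> 0 \<and> hamming_weight w \<le> 3"
proof (cases "even e")
  case True
  let ?A = "{x::'a. x \<noteq> 0 \<and> (x + 1) ^ e + x ^ e + 1 = 0}"
  let ?B = "{x::'a. (x + 1) ^ e - x ^ e - 1 = 0}"
  have "((1::'a) + 1) ^ e + 1 ^ e + 1 = 3"
    using two_power_even[OF char_3 True] by simp
  then have "(1::'a) \<in> ?A"
    using char_3 by simp
  moreover have "(0::'a) \<in> ?B"
    using e_gt_1 by simp
  ultimately consider "?A \<noteq> {1}" "(1::'a) \<in> ?A" | "?B \<noteq> {0}" "(0::'a) \<in> ?B"
    using assms True by argo
  then show ?thesis
  proof cases
    case 1
    from exists_other_element[OF 1(2,1)] obtain x where "x \<in> ?A" "x \<noteq> 1" ..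
    then have "x \<noteq> 0" "(x + 1) ^ e + x ^ e + 1 = 0"
      by simp_all
    then show ?thesis
      using weight_3_codeword_if_not_C2[OF True] \<open>x \<noteq> 1\<close> by blast
  next
    case 2
    from exists_other_element[OF 2(2,1)] obtain x where "x \<in> ?B" "x \<noteq> 0" ..
    then have "(x + 1) ^ e - x ^ e - 1 = 0"
      by simp
    then show ?thesis
      using weight_3_codeword_if_not_C3[OF True] \<open>x \<noteq> 0\<close> by blast
  qed
qed (simp add: weight_3_codeword_if_odd)

lemma card_pairs_less: "card (UNIV :: ('a \<times> 'a) set) < 2 * (n * (n - 1))"
proof -
  have "card (UNIV :: ('a \<times> 'a) set) = card (UNIV :: 'a set) * card (UNIV :: 'a set)"
    by (simp add: UNIV_Times_UNIV[symmetric] card_cartesian_product del: UNIV_Times_UNIV)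
  also have "\<dots> = n * n + 2 * n + 1"
    using card_field three_power_m by (simp add: algebra_simps)
  finally have "card (UNIV :: ('a \<times> 'a) set) = n * n + 2 * n + 1" .
  moreover have "8 * n \<le> n * n"
    using n_ge_8 by (intro mult_right_mono) simp_all
  moreover have "2 * (n * (n - 1)) = 2 * (n * n) - 2 * n"
    by (simp add: diff_mult_distrib2)
  ultimately show ?thesis
    using n_ge_8 by linarith
qed

text \<open>Pigeonhole on the values (c(\<alpha>), c(\<alpha>^e)) of the 2n(n-1) binomials a x^i + b x^j with
  i < j < n and a, b = \<plusminus>1.\<close>
lemma weight_4_codeword: "\<exists>w\<in>code. w \<noteq> 0 \<and> hamming_weight w \<le> 4"
proof -
  define D where "D = (SIGMA j:{..<n}. {..<j}) \<times> ({1, -1::'a} \<times> {1, -1::'a})"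
  define word :: "(nat \<times> nat) \<times> 'a \<times> 'a \<Rightarrow> 'a poly" where
    "word = (\<lambda>((j, i), (a, b)). monom a i + monom b j)"
  define syndrome where "syndrome = (\<lambda>d. (poly (word d) \<alpha>, poly (word d) (\<alpha> ^ e)))"
  have signs: "card {1, -1::'a} = 2"
    using neg_one_neq_one_char_3[OF char_3] by simp
  have "card D = 2 * (n * (n - 1))"
    using two_mul_card_Sigma_lessThan[of n] unfolding D_def card_cartesian_product signs by linarith
  moreover have "card (syndrome ` D) \<le> card (UNIV :: ('a \<times> 'a) set)"
    by (rule card_mono) simp_all
  ultimately have "\<not> inj_on syndrome D"
    using card_pairs_less by (intro pigeonhole) linarith
  then obtain d d' where d: "d \<in> D" "d' \<in> D" "d \<noteq> d'" "syndrome d = syndrome d'"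
    unfolding inj_on_def by blast
  obtain j i a b j' i' a' b' where dd: "d = ((j, i), (a, b))" "d' = ((j', i'), (a', b'))"
    by (metis prod.exhaust)
  have idx: "i < j" "i' < j'" "j < n" "j' < n"
    and signs: "a \<in> {1, -1}" "b \<in> {1, -1}" "a' \<in> {1, -1}" "b' \<in> {1, -1}"
    using d(1,2) by (auto simp: D_def dd)
  let ?w = "word d - word d'"
  have "?w \<noteq> 0"
    using binomial_eq_binomialD[of i j i' j' a b a' b'] idx signs d(3) by (auto simp: word_def dd)
  moreover have "over_gf3 ?w"
    using signs by (auto simp: dd word_def prime_subfield_eq_Ints
        intro!: over_gf3_diff over_gf3_add over_gf3_monom)
  moreover have "poly_support ?w \<subseteq> {i, j, i', j'}"
    by (auto simp: poly_support_def dd word_def coeff_monom split: if_splits)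
  moreover have "card {i, j, i', j'} \<le> 4"
    using card_length[of "[i, j, i', j']"] by simp
  moreover have "poly ?w \<alpha> = 0" "poly ?w (\<alpha> ^ e) = 0"
    using d(4) by (simp_all add: syndrome_def)
  ultimately have "?w \<in> code \<and> ?w \<noteq> 0 \<and> hamming_weight ?w \<le> 4"
    using low_weight_codeword[of ?w "{i, j, i', j'}" 4] idx by auto
  then show ?thesis
    by blast
qed

lemma min_distance_eq_4_iff:
  "Min {hamming_weight c | c. c \<in> code \<and> c \<noteq> 0} = 4 \<longleftrightarrow>
   (even e \<and> {x::'a. x \<noteq> 0 \<and> (x + 1) ^ e + x ^ e + 1 = 0} = {1} \<and>
    {x::'a. (x + 1) ^ e - x ^ e - 1 = 0} = {0})"
  (is "Min ?W = 4 \<longleftrightarrow> ?conditions")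
proof -
  have "finite ?W"
    using finite_code by simp
  obtain w where w: "w \<in> code" "w \<noteq> 0" "hamming_weight w \<le> 4"
    using weight_4_codeword by blast
  then have "hamming_weight w \<in> ?W"
    by blast
  then have "Min ?W \<le> 4"
    using Min_le[OF \<open>finite ?W\<close>] w(3) by fastforce
  have "Min ?W \<in> ?W"
    using \<open>finite ?W\<close> \<open>hamming_weight w \<in> ?W\<close> by (intro Min_in) auto
  show ?thesis
  proof
    assume "Min ?W = 4"
    then have "\<forall>w\<in>code. w \<noteq> 0 \<longrightarrow> 4 \<le> hamming_weight w"
      using \<open>finite ?W\<close> by (metis (mono_tags, lifting) Min_le mem_Collect_eq)
    then show ?conditions
      using weight_3_codeword_unless_conditions by fastforce
  next
    assume ?conditions
    then have "\<forall>w\<in>code. w \<noteq> 0 \<longrightarrow> 4 \<le> hamming_weight w"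
      by (intro ballI impI hamming_weight_ge_4) (auto simp: set_eq_iff)
    then show "Min ?W = 4"
      using \<open>Min ?W \<in> ?W\<close> \<open>Min ?W \<le> 4\<close> by fastforce
  qed
qed

end

theorem theorem1:
  fixes m e :: nat and \<alpha> :: "'a::{field,finite}"
  assumes m_pos: "m > 0"
    and card_q: "card (UNIV :: 'a set) = 3 ^ m"
    and gen: "\<alpha> \<noteq> 0" "(\<lambda>i. \<alpha> ^ i) ` {..<3 ^ m - 1} = UNIV - {0}"
    and e_range: "1 < e" "e < 3 ^ m - 1"
    and e_notin: "e \<notin> cyc_coset (3 ^ m - 1) 1"
    and e_len: "card (cyc_coset (3 ^ m - 1) e) = m"
  shows "has_params3 (cyclic_code3 (3 ^ m - 1) (min_poly3 \<alpha> * min_poly3 (\<alpha> ^ e)))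
            (3 ^ m - 1) (3 ^ m - 1) (3 ^ m - 1 - 2 * m) 4
         \<longleftrightarrow> (even e \<and>
              {x::'a. x \<noteq> 0 \<and> (x + 1) ^ e + x ^ e + 1 = 0} = {1} \<and>
              {x::'a. (x + 1) ^ e - x ^ e - 1 = 0} = {0})"
proof -
  interpret ternary_cyclic_code \<alpha> m e "3 ^ m - 1"
    using m_pos card_q gen(2) e_range e_notin e_len by unfold_locales simp_all
  show ?thesis
    unfolding has_params3_def using card_code min_distance_eq_4_iff by simp
qed

end
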